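(* For any positive integers $q$ and $\ell$ with $\ell>q$ and $\ell$ a multiple of $q$, there exists an instance of \textsc{Min-Lin-Eq$(q)$} on the complete bipartite graph $K_{\ell,\ell}$ (i.e. integers $c_{uv}\in\{0,\dots,q-1\}$ for each edge $uv$, oriented from one side to the other, with constraint $x_u-x_v\equiv c_{uv}\pmod q$) such that for every vertex labeling $x$ of $K_{\ell,\ell}$ with labels in $\{0,\dots,q-1\}$, the number of satisfied constraints is at least $\ell^2/q-\Theta(\ell^{3/2})$ and at most $\ell^2/q+\Theta(\ell^{3/2})$; that is, it lies within $C\ell^{3/2}$ of $\ell^2/q$ for a constant $C$ depending only on $q$.
   Context: \textsc{Min-Lin-Eq$(q)$} on a graph $H$: each edge $uv$ (with a fixed orientation $(u,v)$) carries an integer $c_{uv}\in\{0,\dots,q-1\}$ and the constraint $x_u-x_v\equiv c_{uv}\pmod q$ on assignments $x:V(H)\to\{0,\dots,q-1\}$. *)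

theory Defs
  imports "HOL-Number_Theory.Cong" Complex_Main
begin

text \<open>Left vertices are (Inl i), right vertices (Inr j), for i, j < l; we represent
  a labeling by two functions xL, xR :: nat => nat on {0..<l}.
  Every edge is oriented from the left vertex i to the right vertex j and carries
  the integer c i j in {0..<q}; its constraint is  xL i - xR j = c i j (mod q).\<close>

definition kll_instance :: "nat \<Rightarrow> nat \<Rightarrow> (nat \<Rightarrow> nat \<Rightarrow> nat) \<Rightarrow> bool" where
  "kll_instance q l c \<longleftrightarrow> (\<forall>i<l. \<forall>j<l. c i j < q)"

definition kll_labeling :: "nat \<Rightarrow> nat \<Rightarrow> (nat \<Rightarrow> nat) \<Rightarrow> bool" where
  "kll_labeling q l x \<longleftrightarrow> (\<forall>i<l. x i < q)"

definition kll_satisfied :: "nat \<Rightarrow> nat \<Rightarrow> (nat \<Rightarrow> nat \<Rightarrow> nat) \<Rightarrow> (nat \<Rightarrow> nat) \<Rightarrow> (nat \<Rightarrow> nat) \<Rightarrow> nat" where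
  "kll_satisfied q l c xL xR =
     card {(i, j). i < l \<and> j < l \<and> [int (xL i) - int (xR j) = int (c i j)] (mod int q)}"

end

theory Submission
  imports Defs "HOL-Probability.Hoeffding"
begin

text \<open>A uniformly random instance makes the number of constraints satisfied by any fixed labeling
  binomially distributed with parameters l^2 and 1/q, since each edge label hits the required
  residue independently with probability 1/q. By Hoeffding's inequality a deviation of at least
  C l^(3/2) then has probability at most 2 exp (-2 C^2 l); for C^2 = ln q + 1 this is small enough
  to survive the union bound over the q^(2l) labelings, so some instance has no large deviation
  for any labeling.\<close>

lemma Pi_pmf_map_dependent:
  assumes "finite A"
  shows "Pi_pmf A dflt' (\<lambda>x. map_pmf (f x) (M x)) =
           map_pmf (\<lambda>h x. if x \<in> A then f x (h x) else dflt') (Pi_pmf A dflt M)"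
proof -
  have "Pi_pmf A dflt' (\<lambda>x. map_pmf (f x) (M x)) =
          Pi_pmf A dflt' (\<lambda>x. M x \<bind> (\<lambda>y. return_pmf (f x y)))"
    by (simp add: map_pmf_def)
  also have "\<dots> = Pi_pmf A dflt M \<bind> (\<lambda>h. return_pmf (\<lambda>x. if x \<in> A then f x (h x) else dflt'))"
    using assms by (subst Pi_pmf_bind[where d' = dflt]) auto
  finally show ?thesis
    by (simp add: map_pmf_def)
qed

lemma card_successes_Pi_pmf_binomial:
  assumes "finite A" "p \<in> {0..1}" "\<And>x. x \<in> A \<Longrightarrow> map_pmf (P x) (M x) = bernoulli_pmf p"
  shows "map_pmf (\<lambda>h. card {x\<in>A. P x (h x)}) (Pi_pmf A dflt M) = binomial_pmf (card A) p"
proof -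
  have "Pi_pmf A False (\<lambda>_. bernoulli_pmf p) = Pi_pmf A False (\<lambda>x. map_pmf (P x) (M x))"
    by (rule Pi_pmf_cong) (simp_all add: assms(3))
  then have "binomial_pmf (card A) p =
          map_pmf (\<lambda>f. card {x\<in>A. f x}) (Pi_pmf A False (\<lambda>x. map_pmf (P x) (M x)))"
    using assms(1,2) by (simp add: binomial_pmf_altdef'[where A = A and dflt = False])
  also have "\<dots> = map_pmf (\<lambda>h. card {x\<in>A. P x (h x)}) (Pi_pmf A dflt M)"
    unfolding Pi_pmf_map_dependent[OF assms(1), where dflt = dflt] pmf.map_comp o_def
    by (intro pmf.map_cong refl arg_cong[where f = card]) auto
  finally show ?thesis ..
qed

lemma pmf_of_set_PiE_eq_Pi_pmf:
  assumes "finite A" "\<And>x. x \<in> A \<Longrightarrow> finite (B x)" "\<And>x. x \<in> A \<Longrightarrow> B x \<noteq> {}"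
  shows "pmf_of_set (PiE A B) = Pi_pmf A undefined (\<lambda>x. pmf_of_set (B x))"
proof -
  have "PiE_dflt A undefined B = PiE A B"
    by (auto simp: PiE_dflt_def PiE_def extensional_def)
  with Pi_pmf_of_set[OF assms] show ?thesis
    by simp
qed

lemma map_pmf_uniform_residue_cong:
  assumes "q > 0"
  shows "map_pmf (\<lambda>y. [d = int y] (mod int q)) (pmf_of_set {..<q}) = bernoulli_pmf (1 / q)"
proof (rule pmf_eqI)
  fix b :: bool
  have "[d = int y] (mod int q) \<longleftrightarrow> y = nat (d mod int q)" if "y < q" for y
  proof -
    have "int y mod int q = int y"
      using that by simp
    then have "[d = int y] (mod int q) \<longleftrightarrow> d mod int q = int y"
      by (simp add: Cong.cong_def)
    also have "\<dots> \<longleftrightarrow> y = nat (d mod int q)"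
      using assms by auto
    finally show ?thesis .
  qed
  then have "{..<q} \<inter> {y. [d = int y] (mod int q)} = {nat (d mod int q)}"
    using assms by (auto simp: nat_less_iff)
  moreover have "measure_pmf.prob (pmf_of_set {..<q}) {y. [d = int y] (mod int q)} =
                   card ({..<q} \<inter> {y. [d = int y] (mod int q)}) / q"
    using assms by (subst measure_pmf_of_set) auto
  ultimately have "pmf (map_pmf (\<lambda>y. [d = int y] (mod int q)) (pmf_of_set {..<q})) True = 1 / q"
    by (simp add: pmf_map vimage_def)
  then show "pmf (map_pmf (\<lambda>y. [d = int y] (mod int q)) (pmf_of_set {..<q})) b =
               pmf (bernoulli_pmf (1 / q)) b"
    using assms by (cases b) (simp_all add: pmf_False_conv_True)
qed

lemma random_residues_cong_card_binomial:
  assumes "finite A" "q > 0"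
  shows "map_pmf (\<lambda>c. card {x\<in>A. [d x = int (c x)] (mod int q)}) (pmf_of_set (PiE A (\<lambda>_. {..<q})))
           = binomial_pmf (card A) (1 / q)"
proof -
  have "pmf_of_set (PiE A (\<lambda>_. {..<q})) = Pi_pmf A undefined (\<lambda>_. pmf_of_set {..<q})"
    using assms by (intro pmf_of_set_PiE_eq_Pi_pmf) auto
  then show ?thesis
    using assms
    by (simp add: card_successes_Pi_pmf_binomial[where P = "\<lambda>x y. [d x = int y] (mod int q)"]
        map_pmf_uniform_residue_cong)
qed

lemma pmf_avoids_finite_union:
  assumes "finite I" "(\<Sum>i\<in>I. measure_pmf.prob p (S i)) < 1"
  shows "\<exists>x\<in>set_pmf p. \<forall>i\<in>I. x \<notin> S i"
proof -
  have "measure_pmf.prob p (\<Union>i\<in>I. S i) \<le> (\<Sum>i\<in>I. measure_pmf.prob p (S i))"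
    using assms(1) by (intro measure_pmf.finite_measure_subadditive_finite) auto
  then have "measure_pmf.prob p (\<Union>i\<in>I. S i) < 1"
    using assms(2) by linarith
  then have "measure_pmf.prob p (- (\<Union>i\<in>I. S i)) \<noteq> 0"
    using measure_pmf.prob_compl[of "\<Union>i\<in>I. S i" p] by (simp add: Compl_eq_Diff_UNIV)
  then show ?thesis
    by (auto simp: measure_pmf_zero_iff)
qed

lemma kll_satisfied_eq_card_cong:
  "kll_satisfied q l (\<lambda>i j. c (i, j)) xL xR =
     card {p\<in>{..<l} \<times> {..<l}. [int (xL (fst p)) - int (xR (snd p)) = int (c p)] (mod int q)}"
  unfolding kll_satisfied_def by (rule arg_cong[where f = card]) auto

lemma kll_satisfied_restrict:
  "kll_satisfied q l c (restrict xL {..<l}) (restrict xR {..<l}) = kll_satisfied q l c xL xR"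
  unfolding kll_satisfied_def by (rule arg_cong[where f = card]) auto

lemma kll_satisfied_random_binomial:
  assumes "q > 0"
  shows "map_pmf (\<lambda>c. kll_satisfied q l (\<lambda>i j. c (i, j)) xL xR)
           (pmf_of_set (PiE ({..<l} \<times> {..<l}) (\<lambda>_. {..<q}))) = binomial_pmf (l\<^sup>2) (1 / q)"
  using random_residues_cong_card_binomial[OF _ assms, of "{..<l} \<times> {..<l}"]
  by (simp add: kll_satisfied_eq_card_cong power2_eq_square)

lemma kll_satisfied_random_deviation:
  assumes "q > 0" "l > 0" "\<epsilon> \<ge> 0"
  shows "measure_pmf.prob (pmf_of_set (PiE ({..<l} \<times> {..<l}) (\<lambda>_. {..<q})))
           {c. \<epsilon> \<le> \<bar>real (kll_satisfied q l (\<lambda>i j. c (i, j)) xL xR) - real l ^ 2 / q\<bar>}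
         \<le> 2 * exp (-2 * \<epsilon>\<^sup>2 / real l ^ 2)"
proof -
  let ?R = "pmf_of_set (PiE ({..<l} \<times> {..<l}) (\<lambda>_. {..<q}))"
  let ?sat = "\<lambda>c. kll_satisfied q l (\<lambda>i j. c (i, j)) xL xR"
  have "measure_pmf.prob ?R {c. \<epsilon> \<le> \<bar>real (?sat c) - real l ^ 2 / q\<bar>}
        = measure_pmf.prob (map_pmf ?sat ?R) {k. \<epsilon> \<le> \<bar>real k - real (l\<^sup>2) * (1 / q)\<bar>}"
    by (simp add: vimage_def)
  also have "map_pmf ?sat ?R = binomial_pmf (l\<^sup>2) (1 / q)"
    using assms(1) by (rule kll_satisfied_random_binomial)
  also have "measure_pmf.prob (binomial_pmf (l\<^sup>2) (1 / q)) {k. \<epsilon> \<le> \<bar>real k - real (l\<^sup>2) * (1 / q)\<bar>}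
               \<le> 2 * exp (-2 * \<epsilon>\<^sup>2 / real (l\<^sup>2))"
    using assms by (intro binomial_distribution.prob_abs_ge) (auto simp: binomial_distribution_def)
  finally show ?thesis
    by simp
qed

lemma exists_kll_instance_deviations_lt:
  assumes "q > 0" "l > 0" "\<epsilon> \<ge> 0"
    and "real q ^ l * real q ^ l * (2 * exp (-2 * \<epsilon>\<^sup>2 / real l ^ 2)) < 1"
  shows "\<exists>c\<in>PiE ({..<l} \<times> {..<l}) (\<lambda>_. {..<q}).
           \<forall>xL\<in>PiE {..<l} (\<lambda>_. {..<q}). \<forall>xR\<in>PiE {..<l} (\<lambda>_. {..<q}).
             \<bar>real (kll_satisfied q l (\<lambda>i j. c (i, j)) xL xR) - real l ^ 2 / q\<bar> < \<epsilon>"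
proof -
  define R where "R = pmf_of_set (PiE ({..<l} \<times> {..<l}) (\<lambda>_. {..<q}))"
  define labelings :: "(nat \<Rightarrow> nat) set" where "labelings = PiE {..<l} (\<lambda>_. {..<q})"
  define bad where
    "bad = (\<lambda>(xL, xR). {c. \<epsilon> \<le> \<bar>real (kll_satisfied q l (\<lambda>i j. c (i, j)) xL xR) - real l ^ 2 / q\<bar>})"
  have "(\<Sum>x\<in>labelings \<times> labelings. measure_pmf.prob R (bad x))
          \<le> (\<Sum>x\<in>labelings \<times> labelings. 2 * exp (-2 * \<epsilon>\<^sup>2 / real l ^ 2))"
    using kll_satisfied_random_deviation[OF assms(1-3)]
    by (intro sum_mono) (auto simp: R_def bad_def)
  also have "\<dots> < 1"
    using assms(4) by (simp add: labelings_def card_PiE card_cartesian_product)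
  finally have "(\<Sum>x\<in>labelings \<times> labelings. measure_pmf.prob R (bad x)) < 1" .
  moreover have "finite (labelings \<times> labelings)"
    by (simp add: labelings_def finite_PiE)
  ultimately obtain c where c: "c \<in> set_pmf R" and good: "\<forall>x\<in>labelings \<times> labelings. c \<notin> bad x"
    using pmf_avoids_finite_union by blast
  have "set_pmf R = PiE ({..<l} \<times> {..<l}) (\<lambda>_. {..<q})"
    unfolding R_def using assms(1) by (intro set_pmf_of_set) (auto simp: PiE_eq_empty_iff finite_PiE)
  moreover have "\<bar>real (kll_satisfied q l (\<lambda>i j. c (i, j)) xL xR) - real l ^ 2 / q\<bar> < \<epsilon>"
    if "xL \<in> labelings" "xR \<in> labelings" for xL xR
    using good that by (auto simp: bad_def not_le)
  ultimately show ?thesis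
    using c unfolding labelings_def by blast
qed

lemma labelings_tail_bound_lt_one:
  assumes "q > 0" "l > 0"
  shows "real q ^ l * real q ^ l * (2 * exp (-2 * (sqrt (ln q + 1) * real l powr (3/2))\<^sup>2 / real l ^ 2)) < 1"
proof -
  have "(real l powr (3/2))\<^sup>2 = real l powr (3/2 + 3/2)"
    unfolding power2_eq_square by (rule powr_add[symmetric])
  also have "\<dots> = real l ^ 3"
    using assms(2) by (simp add: powr_numeral)
  finally have "(sqrt (ln q + 1) * real l powr (3/2))\<^sup>2 = (ln q + 1) * real l ^ 3"
    using assms(1) by (simp add: power_mult_distrib)
  then have "(sqrt (ln q + 1) * real l powr (3/2))\<^sup>2 / real l ^ 2 = (ln q + 1) * l"
    using assms(2) by (simp add: power2_eq_square power3_eq_cube)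
  moreover have "real q ^ l = exp (l * ln q)"
    using assms(1) by (simp add: exp_of_nat_mult)
  ultimately have "real q ^ l * real q ^ l * exp (-2 * (sqrt (ln q + 1) * real l powr (3/2))\<^sup>2 / real l ^ 2)
                     = exp (- 2 * l)"
    by (simp add: exp_add[symmetric] algebra_simps)
  moreover have "2 * exp (- 2 * real l) < 1"
  proof -
    have "3 \<le> exp (2 * real l)"
      using exp_ge_add_one_self[of "2 * real l"] assms(2) by linarith
    then show ?thesis
      by (simp add: exp_minus field_simps)
  qed
  ultimately show ?thesis
    by simp
qed

theorem lemma7:
  fixes q :: nat
  assumes "q > 0"
  shows "\<exists>C::real. \<forall>l::nat. l > q \<and> q dvd l \<longrightarrow>
           (\<exists>c. kll_instance q l c \<and>
              (\<forall>xL xR. kll_labeling q l xL \<and> kll_labeling q l xR \<longrightarrow>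
                 \<bar>real (kll_satisfied q l c xL xR) - real l ^ 2 / real q\<bar>
                   \<le> C * real l powr (3/2)))"
proof (intro exI[of _ "sqrt (ln q + 1)"] allI impI)
  fix l :: nat
  assume "l > q \<and> q dvd l"
  then have "l > 0"
    by simp
  have bound_nonneg: "sqrt (ln q + 1) * real l powr (3/2) \<ge> 0"
    using assms by simp
  obtain c where c: "c \<in> PiE ({..<l} \<times> {..<l}) (\<lambda>_. {..<q})"
    and deviation: "\<forall>xL\<in>PiE {..<l} (\<lambda>_. {..<q}). \<forall>xR\<in>PiE {..<l} (\<lambda>_. {..<q}).
       \<bar>real (kll_satisfied q l (\<lambda>i j. c (i, j)) xL xR) - real l ^ 2 / q\<bar> < sqrt (ln q + 1) * real l powr (3/2)"
    using exists_kll_instance_deviations_lt[OF assms \<open>l > 0\<close> bound_nonneg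
        labelings_tail_bound_lt_one[OF assms \<open>l > 0\<close>]] by blast
  show "\<exists>c. kll_instance q l c \<and>
              (\<forall>xL xR. kll_labeling q l xL \<and> kll_labeling q l xR \<longrightarrow>
                 \<bar>real (kll_satisfied q l c xL xR) - real l ^ 2 / real q\<bar> \<le> sqrt (ln q + 1) * real l powr (3/2))"
  proof (intro exI[of _ "\<lambda>i j. c (i, j)"] conjI allI impI)
    show "kll_instance q l (\<lambda>i j. c (i, j))"
      using c by (auto simp: kll_instance_def)
    fix xL xR
    assume "kll_labeling q l xL \<and> kll_labeling q l xR"
    then have "restrict xL {..<l} \<in> PiE {..<l} (\<lambda>_. {..<q})" "restrict xR {..<l} \<in> PiE {..<l} (\<lambda>_. {..<q})"
      by (auto simp: kll_labeling_def)
    with deviation have "\<bar>real (kll_satisfied q l (\<lambda>i j. c (i, j)) (restrict xL {..<l}) (restrict xR {..<l}))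
                          - real l ^ 2 / real q\<bar> < sqrt (ln q + 1) * real l powr (3/2)"
      by blast
    then show "\<bar>real (kll_satisfied q l (\<lambda>i j. c (i, j)) xL xR) - real l ^ 2 / real q\<bar>
                 \<le> sqrt (ln q + 1) * real l powr (3/2)"
      by (simp add: kll_satisfied_restrict)
  qed
qed

end
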